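(* Let $F$ be any probability distribution on $[0,\infty)\times\{1,2,3,\dots\}$. Then there exists a sequence of $\mathrm{MMPH}^\ast$ distributions (as defined in the context) that converges weakly to $F$.
   Context: A sub-intensity matrix of dimension $p$ is a $p\times p$ real matrix $\mathbf{T}=(t_{ij})$ with $t_{ij}\ge 0$ for $i\neq j$, nonpositive row sums, and such that $\mathbf{T}$ is nonsingular; its exit vector is $\mathbf{t}=-\mathbf{T}\mathbf{e}$, where $\mathbf{e}$ is the column vector of ones. Let $\{X_t\}_{t\ge0}$ be a time-homogeneous Markov jump process on $\{1,\dots,p,p+1\}$ in which $1,\dots,p$ are transient and $p+1$ is absorbing, with generator $\begin{pmatrix}\mathbf{T}&\mathbf{t}\\ \mathbf{0}&0\end{pmatrix}$ and initial distribution $\boldsymbol{\alpha}$ (a probability row vector on $\{1,\dots,p\}$). Let $Y=\inf\{t>0: X_t=p+1\}$ be the absorption time. Partition $\{1,\dots,p\}$ into disjoint sets $E^+$ and $E^0$, and assume that $\boldsymbol{\alpha}$ is supported on $E^+$ (i.e. $\alpha_i=0$ for $i\in E^0$). Let $Z_0,Z_1,\dots$ be the embedded (jump) chain of $X$ (so $Z_0=X_0$ and $Z_k$ is the state entered at the $k$-th jump); let $N$ be the number of indices $k\ge0$ before absorption with $Z_k\in E^+$, i.e. the number of visits (including the initial one) of $X$ to states of $E^+$ before absorption; under the assumption on $\boldsymbol{\alpha}$, $N\ge1$. The distribution of $(Y,N)$ on $[0,\infty)\times\{1,2,\dots\}$ is called the $\mathrm{MMPH}^\ast$ distribution with parameters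 $(\boldsymbol{\alpha},\mathbf{T},E^+)$; the $\mathrm{MMPH}^\ast$ class consists of all such distributions, for all $p\ge1$, all sub-intensity matrices $\mathbf{T}$, all partitions and all such $\boldsymbol{\alpha}$. Weak convergence refers to probability measures on $[0,\infty)\times\{1,2,\dots\}$ with the product of the usual and the discrete topology. *)

theory Defs
  imports "HOL-Probability.Probability" "Jordan_Normal_Form.Determinant"
begin

text \<open>States are indexed 0,...,p-1 (transient) and p (absorbing).
  T is a p x p real matrix, alpha a real vector of dimension p,
  Eplus a subset of the transient states.\<close>

definition sub_intensity_matrix :: "nat \<Rightarrow> real mat \<Rightarrow> bool" where
  "sub_intensity_matrix p T \<longleftrightarrow>
     T \<in> carrier_mat p p \<and>
     (\<forall>i<p. \<forall>j<p. i \<noteq> j \<longrightarrow> T $$ (i,j) \<ge> 0) \<and>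
     (\<forall>i<p. (\<Sum>j<p. T $$ (i,j)) \<le> 0) \<and>
     invertible_mat T"

definition exit_rate :: "nat \<Rightarrow> real mat \<Rightarrow> nat \<Rightarrow> real" where
  "exit_rate p T i = - (\<Sum>j<p. T $$ (i,j))"

definition jump_rate :: "real mat \<Rightarrow> nat \<Rightarrow> real" where
  "jump_rate T i = - T $$ (i,i)"

definition jump_prob :: "nat \<Rightarrow> real mat \<Rightarrow> nat \<Rightarrow> nat \<Rightarrow> real" where
  "jump_prob p T i j =
     (if i < p then
        (if j < p then (if i = j then 0 else T $$ (i,j) / jump_rate T i)
         else if j = p then exit_rate p T i / jump_rate T i else 0)
      else if i = p then (if j = p then 1 else 0) else 0)"

text \<open>Holding-time law in state i: exponential with rate jump_rate T i
  for transient i; degenerate at 0 in the absorbing state (irrelevant).\<close>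
definition holding_prob :: "nat \<Rightarrow> real mat \<Rightarrow> nat \<Rightarrow> real set \<Rightarrow> real" where
  "holding_prob p T i B =
     (if i < p then measure (density lborel (exponential_density (jump_rate T i))) B
      else indicator B 0)"

text \<open>Jump chain / holding time description of the Markov jump process with
  generator [[T, t],[0, 0]] and initial distribution alpha: Z k is the state
  entered at the k-th jump (Z 0 = X 0) and S k the holding time in Z k.\<close>
definition markov_jump_process ::
  "'w measure \<Rightarrow> (nat \<Rightarrow> 'w \<Rightarrow> nat) \<Rightarrow> (nat \<Rightarrow> 'w \<Rightarrow> real) \<Rightarrow>
   nat \<Rightarrow> real mat \<Rightarrow> real vec \<Rightarrow> bool" where
  "markov_jump_process M Z S p T \<alpha> \<longleftrightarrow>
     prob_space M \<and>
     (\<forall>k. Z k \<in> measurable M (count_space UNIV)) \<and>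
     (\<forall>k. S k \<in> borel_measurable M) \<and>
     (\<forall>(n::nat) (z::nat \<Rightarrow> nat) (B::nat \<Rightarrow> real set).
        (\<forall>k\<le>n. B k \<in> sets borel) \<longrightarrow>
        measure M {\<omega> \<in> space M. \<forall>k\<le>n. Z k \<omega> = z k \<and> S k \<omega> \<in> B k}
        = (if z 0 < p then \<alpha> $ (z 0) else 0)
          * (\<Prod>k<n. jump_prob p T (z k) (z (Suc k)))
          * (\<Prod>k\<le>n. holding_prob p T (z k) (B k)))"

definition absorption_index :: "nat \<Rightarrow> (nat \<Rightarrow> 'w \<Rightarrow> nat) \<Rightarrow> 'w \<Rightarrow> nat" where
  "absorption_index p Z \<omega> = (LEAST k. Z k \<omega> = p)"

definition absorption_time ::
  "nat \<Rightarrow> (nat \<Rightarrow> 'w \<Rightarrow> nat) \<Rightarrow> (nat \<Rightarrow> 'w \<Rightarrow> real) \<Rightarrow> 'w \<Rightarrow> real" where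
  "absorption_time p Z S \<omega> = (\<Sum>k < absorption_index p Z \<omega>. S k \<omega>)"

definition visits_count ::
  "nat \<Rightarrow> (nat \<Rightarrow> 'w \<Rightarrow> nat) \<Rightarrow> nat set \<Rightarrow> 'w \<Rightarrow> nat" where
  "visits_count p Z Eplus \<omega> = card {k. k < absorption_index p Z \<omega> \<and> Z k \<omega> \<in> Eplus}"

definition MMPH_star :: "(real \<times> nat) measure \<Rightarrow> bool" where
  "MMPH_star F \<longleftrightarrow>
     (\<exists>(p::nat) (T::real mat) (\<alpha>::real vec) (Eplus::nat set)
        (M::((nat \<Rightarrow> nat) \<times> (nat \<Rightarrow> real)) measure) Z S.
        0 < p \<and> sub_intensity_matrix p T \<and>
        \<alpha> \<in> carrier_vec p \<and> (\<forall>i<p. \<alpha> $ i \<ge> 0) \<and> (\<Sum>i<p. \<alpha> $ i) = 1 \<and>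
        Eplus \<subseteq> {..<p} \<and> (\<forall>i<p. i \<notin> Eplus \<longrightarrow> \<alpha> $ i = 0) \<and>
        markov_jump_process M Z S p T \<alpha> \<and>
        F = distr M borel (\<lambda>\<omega>. (absorption_time p Z S \<omega>, visits_count p Z Eplus \<omega>)))"

text \<open>Weak convergence of probability measures on R x N (product of the usual and
  the discrete topology): convergence of integrals of bounded continuous functions.\<close>
definition weak_conv_prod :: "(nat \<Rightarrow> (real \<times> nat) measure) \<Rightarrow> (real \<times> nat) measure \<Rightarrow> bool" where
  "weak_conv_prod \<mu> F \<longleftrightarrow>
     (\<forall>f :: real \<times> nat \<Rightarrow> real. continuous_on UNIV f \<and> bounded (range f) \<longrightarrow>
        (\<lambda>n. integral\<^sup>L (\<mu> n) f) \<longlonglongrightarrow> integral\<^sup>L F f)"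

end

theory Submission
  imports Defs
begin

text \<open>At mesh \<open>1/m\<close>, the mass of \<open>F\<close> at \<open>(x, n)\<close> is moved to the right end point \<open>a\<close> of
  the grid interval containing \<open>x\<close> and spread out as an Erlang law with \<open>m\<close> phases and mean \<open>a\<close>,
  times the point mass at \<open>n\<close> (for \<open>n \<le> m\<close>). That law is the law of \<open>(Y, N)\<close> for a chain
  passing deterministically through \<open>m\<close> states with rate \<open>m / a\<close> whose first \<open>n\<close> states form
  \<open>E\<^sup>+\<close>; running one such chain per grid cell and starting in it with the \<open>F\<close>-mass of the cell
  realises the whole mixture as a single MMPH* distribution. The Erlang law has variance
  \<open>a\<^sup>2 / m\<close>, so by Chebyshev's inequality it concentrates near \<open>x\<close> as \<open>m\<close> grows, and dominated
  convergence yields the convergence of integrals of bounded continuous functions.\<close>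

section \<open>Concentration of Erlang distributions\<close>

lemma (in prob_space) abs_expectation_diff_le_variance:
  fixes X :: "'a \<Rightarrow> real" and g :: "real \<Rightarrow> real"
  assumes X: "random_variable borel X" "integrable M (\<lambda>\<omega>. X \<omega> ^ 2)"
    and g: "g \<in> borel_measurable borel" "\<And>y. \<bar>g y\<bar> \<le> B"
    and d: "0 < d" and near: "\<And>y. \<bar>y - x\<bar> < d \<Longrightarrow> \<bar>g y - g x\<bar> \<le> e"
    and mean: "\<bar>expectation X - x\<bar> < d / 2"
  shows "\<bar>expectation (\<lambda>\<omega>. g (X \<omega>)) - g x\<bar> \<le> e + 2 * B * (variance X / (d / 2)\<^sup>2)"
proof -
  define A where "A = {\<omega> \<in> space M. d / 2 \<le> \<bar>X \<omega> - expectation X\<bar>}"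
  have [measurable]: "X \<in> borel_measurable M" "g \<in> borel_measurable borel" using X g by auto
  have A_sets: "A \<in> events" unfolding A_def by measurable
  have Chebyshev: "prob A \<le> variance X / (d / 2)\<^sup>2"
    unfolding A_def using X d by (intro Chebyshev_inequality) auto
  have "0 \<le> e" using near[of x] d by simp
  have int_g: "integrable M (\<lambda>\<omega>. g (X \<omega>))"
    by (rule integrable_const_bound[where B = B]) (auto simp: g)
  have "\<bar>expectation (\<lambda>\<omega>. g (X \<omega>)) - g x\<bar> = \<bar>expectation (\<lambda>\<omega>. g (X \<omega>) - g x)\<bar>"
    using int_g by (simp add: prob_space)
  also have "\<dots> \<le> expectation (\<lambda>\<omega>. \<bar>g (X \<omega>) - g x\<bar>)"
    using integral_norm_bound[of M "\<lambda>\<omega>. g (X \<omega>) - g x"] by simp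
  also have "\<dots> \<le> expectation (\<lambda>\<omega>. e + 2 * B * indicator A \<omega>)"
  proof (rule integral_mono)
    show "integrable M (\<lambda>\<omega>. \<bar>g (X \<omega>) - g x\<bar>)" using int_g by simp
    show "integrable M (\<lambda>\<omega>. e + 2 * B * indicator A \<omega>)"
      using A_sets by (auto simp: emeasure_eq_measure)
  next
    fix \<omega> assume \<omega>: "\<omega> \<in> space M"
    show "\<bar>g (X \<omega>) - g x\<bar> \<le> e + 2 * B * indicator A \<omega>"
    proof (cases "\<omega> \<in> A")
      case True
      then show ?thesis using g(2)[of "X \<omega>"] g(2)[of x] \<open>0 \<le> e\<close> by simp
    next
      case False
      then have "\<bar>X \<omega> - expectation X\<bar> < d / 2" using \<omega> by (auto simp: A_def)
      then have "\<bar>X \<omega> - x\<bar> < d" using mean by linarith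
      then show ?thesis using near False by simp
    qed
  qed
  also have "\<dots> = e + 2 * B * prob A"
    using A_sets by (simp add: prob_space emeasure_eq_measure)
  also have "\<dots> \<le> e + 2 * B * (variance X / (d / 2)\<^sup>2)"
    using Chebyshev g(2)[of 0] by (intro add_left_mono mult_left_mono) auto
  finally show ?thesis .
qed

lemma erlang_scaled_moments:
  fixes k :: nat
  assumes a: "0 < a"
  defines "D \<equiv> density lborel (erlang_density k (real (Suc k) / a))"
  shows "prob_space D" and "integrable D (\<lambda>y. y\<^sup>2)" and "(\<integral>y. y \<partial>D) = a"
    and "(\<integral>y. (y - a)\<^sup>2 \<partial>D) = a\<^sup>2 / real (Suc k)"
proof -
  have l: "0 < real (Suc k) / a" using a by simp
  show "prob_space D" unfolding D_def by (rule prob_space_erlang_density[OF l])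
  then interpret prob_space D .
  have distr: "distributed D lborel (\<lambda>y. y) (erlang_density k (real (Suc k) / a))"
    by (auto simp: distributed_def D_def distr_id2)
  show "integrable D (\<lambda>y. y\<^sup>2)" by (rule erlang_ith_moment_integrable[OF l distr])
  have "expectation (\<lambda>y. y) = fact (Suc k) / (fact k * (real (Suc k) / a))"
    using erlang_ith_moment[OF l distr, of 1] by simp
  also have "\<dots> = a" using a by (simp add: fact_Suc field_simps del: of_nat_Suc)
  finally show mean: "(\<integral>y. y \<partial>D) = a" .
  have "variance (\<lambda>y. y) = real (Suc k) / (real (Suc k) / a)\<^sup>2"
    using erlang_distributed_variance[OF l distr] by simp
  also have "\<dots> = a\<^sup>2 / real (Suc k)"
    by (simp add: power_divide power2_eq_square field_simps del: of_nat_Suc)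
  finally show "(\<integral>y. (y - a)\<^sup>2 \<partial>D) = a\<^sup>2 / real (Suc k)" using mean by simp
qed

lemma tendsto_integral_erlang_scaled:
  fixes g :: "real \<Rightarrow> real" and a :: "nat \<Rightarrow> real"
  assumes g: "g \<in> borel_measurable borel" "\<And>y. \<bar>g y\<bar> \<le> B" "isCont g x"
    and a: "\<And>k. 0 < a k" "a \<longlonglongrightarrow> x"
  shows "(\<lambda>k. \<integral>y. g y \<partial>density lborel (erlang_density k (real (Suc k) / a k))) \<longlonglongrightarrow> g x"
proof (rule tendstoI)
  fix \<epsilon> :: real assume \<epsilon>: "0 < \<epsilon>"
  obtain d where d: "0 < d" and near: "\<And>y. \<bar>y - x\<bar> < d \<Longrightarrow> \<bar>g y - g x\<bar> \<le> \<epsilon> / 2"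
    using g(3) \<epsilon> unfolding continuous_at_eps_delta dist_real_def
    by (metis half_gt_zero less_eq_real_def)
  define err where "err k = 2 * B * ((a k)\<^sup>2 / real (Suc k) / (d / 2)\<^sup>2)" for k
  have bound: "\<bar>(\<integral>y. g y \<partial>density lborel (erlang_density k (real (Suc k) / a k))) - g x\<bar>
      \<le> \<epsilon> / 2 + err k" if close: "\<bar>a k - x\<bar> < d / 2" for k
  proof -
    interpret prob_space "density lborel (erlang_density k (real (Suc k) / a k))"
      by (rule erlang_scaled_moments(1)[OF a(1)])
    show ?thesis
      using abs_expectation_diff_le_variance[of "\<lambda>y. y" g B d x "\<epsilon> / 2"] close
        erlang_scaled_moments(2-4)[OF a(1)] g(1,2) d near
      by (simp add: err_def)
  qed
  have "err \<longlonglongrightarrow> 2 * B * (x\<^sup>2 * 0 / (d / 2)\<^sup>2)"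
    unfolding err_def divide_inverse[of "(a _)\<^sup>2"]
    by (intro tendsto_intros a(2) LIMSEQ_inverse_real_of_nat) (use d in simp)
  then have "eventually (\<lambda>k. err k < \<epsilon> / 2) sequentially"
    by (rule order_tendstoD(2)) (use \<epsilon> in simp)
  moreover have "eventually (\<lambda>k. \<bar>a k - x\<bar> < d / 2) sequentially"
    using tendstoD[OF a(2), of "d / 2"] d by (simp add: dist_real_def)
  ultimately show "eventually (\<lambda>k. dist (\<integral>y. g y \<partial>density lborel
      (erlang_density k (real (Suc k) / a k))) (g x) < \<epsilon>) sequentially"
    by eventually_elim (use bound in \<open>fastforce simp: dist_real_def\<close>)
qed

section \<open>Sample paths of a jump chain\<close>

type_synonym jump_path = "(nat \<Rightarrow> nat) \<times> (nat \<Rightarrow> real)"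

definition path_space :: "jump_path measure" where
  "path_space = PiM UNIV (\<lambda>_. count_space UNIV) \<Otimes>\<^sub>M PiM UNIV (\<lambda>_. borel)"

definition path_state :: "nat \<Rightarrow> jump_path \<Rightarrow> nat" where
  "path_state k \<omega> = fst \<omega> k"

definition path_holding :: "nat \<Rightarrow> jump_path \<Rightarrow> real" where
  "path_holding k \<omega> = snd \<omega> k"

definition path_cylinder :: "nat \<Rightarrow> (nat \<Rightarrow> nat) \<Rightarrow> (nat \<Rightarrow> real set) \<Rightarrow> jump_path set" where
  "path_cylinder n z B = {\<omega>. \<forall>k\<le>n. path_state k \<omega> = z k \<and> path_holding k \<omega> \<in> B k}"

lemma space_path_space: "space path_space = UNIV"
  by (simp add: path_space_def space_pair_measure space_PiM)

lemma measurable_path_state[measurable]: "path_state k \<in> path_space \<rightarrow>\<^sub>M count_space UNIV"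
  unfolding path_space_def path_state_def[abs_def] by measurable

lemma measurable_path_holding[measurable]: "path_holding k \<in> borel_measurable path_space"
  unfolding path_space_def path_holding_def[abs_def] by measurable

lemma path_cylinder_sets:
  assumes "\<And>k. k \<le> n \<Longrightarrow> B k \<in> sets borel"
  shows "path_cylinder n z B \<in> sets path_space"
proof -
  have "path_cylinder n z B =
      (\<Inter>k\<in>{..n}. {\<omega> \<in> space path_space. path_state k \<omega> = z k \<and> path_holding k \<omega> \<in> B k})"
    by (auto simp: path_cylinder_def space_path_space)
  also have "\<dots> \<in> sets path_space"
  proof (intro sets.finite_INT)
    fix k assume "k \<in> {..n}"
    then have [measurable]: "B k \<in> sets borel" using assms by auto
    show "{\<omega> \<in> space path_space. path_state k \<omega> = z k \<and> path_holding k \<omega> \<in> B k} \<in> sets path_space"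
      by measurable
  qed auto
  finally show ?thesis .
qed

lemma measurable_absorption_index:
  "absorption_index p path_state \<in> path_space \<rightarrow>\<^sub>M count_space UNIV"
  unfolding absorption_index_def[abs_def] by measurable

definition time_and_visits :: "nat \<Rightarrow> nat set \<Rightarrow> jump_path \<Rightarrow> real \<times> nat" where
  "time_and_visits p E \<omega> = (absorption_time p path_state path_holding \<omega>, visits_count p path_state E \<omega>)"

lemma measurable_time_and_visits: "time_and_visits p E \<in> path_space \<rightarrow>\<^sub>M borel"
proof -
  have visits: "visits_count p path_state E \<omega> =
      (\<Sum>k<absorption_index p path_state \<omega>. of_bool (path_state k \<omega> \<in> E))" for \<omega>
    by (simp add: visits_count_def Collect_conj_eq Int_commute lessThan_def)
  have "(\<lambda>\<omega>. absorption_time p path_state path_holding \<omega>) \<in> borel_measurable path_space"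
    unfolding absorption_time_def
    by (rule measurable_compose_countable'[where g = "\<lambda>\<omega>. absorption_index p path_state \<omega>"
          and f = "\<lambda>i \<omega>. \<Sum>k<i. path_holding k \<omega>", OF _ measurable_absorption_index]) auto
  moreover have "(\<lambda>\<omega>. visits_count p path_state E \<omega>) \<in> path_space \<rightarrow>\<^sub>M count_space UNIV"
    unfolding visits
    by (rule measurable_compose_countable'[where g = "\<lambda>\<omega>. absorption_index p path_state \<omega>"
          and f = "\<lambda>i \<omega>. \<Sum>k<i. of_bool (path_state k \<omega> \<in> E)", OF _ measurable_absorption_index]) auto
  ultimately show ?thesis
    unfolding borel_prod[symmetric] time_and_visits_def[abs_def]
    by (intro measurable_Pair) (simp_all add: measurable_cong_sets[OF refl sets_borel_eq_count_space])
qed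

section \<open>Parallel Erlang chains\<close>

lemma invertible_mat_if_det_nonzero:
  fixes A :: "'a :: field mat"
  assumes A: "A \<in> carrier_mat n n" and det: "det A \<noteq> 0"
  shows "invertible_mat A"
proof -
  have "A \<in> Units (ring_mat TYPE('a) n ())" by (rule det_non_zero_imp_unit[OF A det])
  then obtain B where "B \<in> carrier_mat n n" "B * A = 1\<^sub>m n" "A * B = 1\<^sub>m n"
    by (auto simp: Units_def ring_mat_def)
  then show ?thesis
    using A by (auto simp: invertible_mat_def inverts_mat_def square_mat.simps)
qed

lemma mult_add_less_mult:
  fixes c k L K :: nat
  assumes "c < K" "k < L"
  shows "c * L + k < K * L"
proof -
  have "c * L + k < (c + 1) * L" using assms(2) by simp
  also have "\<dots> \<le> K * L" using assms(1) by (intro mult_right_mono) auto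
  finally show ?thesis .
qed

lemma Suc_less_if_mod_Suc_less:
  fixes s L K :: nat
  assumes "s < K * L" "Suc (s mod L) < L"
  shows "Suc s < K * L"
proof -
  have "s div L < K" using assms(1) by (simp add: less_mult_imp_div_less)
  then have "s div L * L + Suc (s mod L) < K * L" by (rule mult_add_less_mult[OF _ assms(2)])
  then show ?thesis by (metis add_Suc_right div_mult_mod_eq)
qed

text \<open>\<open>erlang_density k l\<close> is the density of a sum of \<open>k + 1\<close> independent exponentials with rate \<open>l\<close>.\<close>

definition erlang_count_law :: "nat \<Rightarrow> real \<Rightarrow> nat \<Rightarrow> (real \<times> nat) measure" where
  "erlang_count_law k l n = distr (density lborel (erlang_density k l)) borel (\<lambda>y. (y, n))"

text \<open>Chain \<open>c < K\<close> runs through the states \<open>c * L, ..., c * L + L - 1\<close> in order, each with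
  rate \<open>rate c\<close>, and is absorbed in \<open>K * L\<close> afterwards; its first \<open>visits c\<close> states form \<open>E\<^sup>+\<close>.\<close>

locale erlang_chains =
  fixes L K :: nat and rate :: "nat \<Rightarrow> real" and visits :: "nat \<Rightarrow> nat"
  assumes phases_pos: "0 < L" and rate_pos: "\<And>c. 0 < rate c"
    and visits_pos: "\<And>c. 0 < visits c" and visits_le: "\<And>c. visits c \<le> L"
begin

definition intensity :: "real mat" where
  "intensity = mat (K * L) (K * L) (\<lambda>(i, j). if i = j then - rate (i div L)
     else if j = Suc i \<and> Suc (i mod L) < L then rate (i div L) else 0)"

definition successor :: "nat \<Rightarrow> nat" where
  "successor s = (if s < K * L \<and> Suc (s mod L) < L then Suc s else K * L)"

definition chain_path :: "nat \<Rightarrow> nat \<Rightarrow> nat" where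
  "chain_path c k = (if k < L then c * L + k else K * L)"

definition plus_states :: "nat set" where
  "plus_states = {s. s < K * L \<and> s mod L < visits (s div L)}"

lemma intensity_index:
  "i < K * L \<Longrightarrow> j < K * L \<Longrightarrow> intensity $$ (i, j) = (if i = j then - rate (i div L)
     else if j = Suc i \<and> Suc (i mod L) < L then rate (i div L) else 0)"
  by (simp add: intensity_def)

lemma intensity_row_sum:
  assumes s: "s < K * L"
  shows "(\<Sum>j<K * L. intensity $$ (s, j)) = (if Suc (s mod L) < L then 0 else - rate (s div L))"
proof -
  have "(\<Sum>j<K * L. intensity $$ (s, j)) = (\<Sum>j<K * L. (if j = s then - rate (s div L) else 0)
      + (if j = Suc s \<and> Suc (s mod L) < L then rate (s div L) else 0))"
    by (intro sum.cong) (auto simp: intensity_index s)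
  also have "\<dots> = (if Suc (s mod L) < L then 0 else - rate (s div L))"
    using s Suc_less_if_mod_Suc_less[OF s] by (simp add: sum.distrib)
  finally show ?thesis .
qed

lemma jump_prob_intensity:
  assumes s: "s \<le> K * L"
  shows "jump_prob (K * L) intensity s j = (if j = successor s then 1 else 0)"
proof (cases "s < K * L")
  case True
  have "jump_rate intensity s = rate (s div L)"
    using True by (simp add: jump_rate_def intensity_index)
  moreover have "exit_rate (K * L) intensity s = (if Suc (s mod L) < L then 0 else rate (s div L))"
    using True by (simp add: exit_rate_def intensity_row_sum)
  ultimately show ?thesis
    using True rate_pos[of "s div L"] Suc_less_if_mod_Suc_less[OF True]
    by (auto simp: jump_prob_def successor_def intensity_index)
next
  case False
  then show ?thesis using s by (auto simp: jump_prob_def successor_def)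
qed

lemma sub_intensity_matrix_intensity: "sub_intensity_matrix (K * L) intensity"
proof -
  have carrier: "intensity \<in> carrier_mat (K * L) (K * L)" by (simp add: intensity_def)
  have "upper_triangular intensity" by (auto simp: upper_triangular_def intensity_def)
  then have "det intensity = prod_list (diag_mat intensity)"
    by (rule det_upper_triangular[OF _ carrier])
  also have "\<dots> \<noteq> 0"
    using rate_pos by (auto simp: diag_mat_def intensity_def) (metis less_irrefl)
  finally have "invertible_mat intensity" by (rule invertible_mat_if_det_nonzero[OF carrier])
  moreover have "(\<Sum>j<K * L. intensity $$ (i, j)) \<le> 0" if "i < K * L" for i
    using rate_pos[of "i div L"] by (simp add: intensity_row_sum[OF that])
  ultimately show ?thesis
    unfolding sub_intensity_matrix_def
    using carrier rate_pos by (auto simp: intensity_index less_imp_le)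
qed

lemma chain_path_le: "c < K \<Longrightarrow> chain_path c k \<le> K * L"
  using mult_add_less_mult[of c K k L] by (auto simp: chain_path_def)

lemma successor_chain_path:
  assumes c: "c < K"
  shows "successor (chain_path c k) = chain_path c (Suc k)"
proof (cases "k < L")
  case True
  then show ?thesis
    using mult_add_less_mult[OF c True] by (auto simp: chain_path_def successor_def)
qed (auto simp: chain_path_def successor_def)

lemma prod_jump_prob_intensity:
  assumes c: "c < K" and start: "z 0 = c * L"
  shows "(\<Prod>k<n. jump_prob (K * L) intensity (z k) (z (Suc k)))
    = (if \<forall>k\<le>n. z k = chain_path c k then 1 else 0)"
proof (induction n)
  case 0
  then show ?case using start phases_pos by (simp add: chain_path_def)
next
  case (Suc n)
  show ?case
  proof (cases "\<forall>k\<le>n. z k = chain_path c k")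
    case True
    then have "jump_prob (K * L) intensity (z n) (z (Suc n))
        = (if z (Suc n) = chain_path c (Suc n) then 1 else 0)"
      by (simp add: jump_prob_intensity[OF chain_path_le[OF c]] successor_chain_path[OF c])
    moreover have "(\<forall>k\<le>Suc n. z k = chain_path c k) \<longleftrightarrow> z (Suc n) = chain_path c (Suc n)"
      using True le_Suc_eq by auto
    ultimately show ?thesis using Suc True by simp
  qed (use Suc in auto)
qed

definition holding_law :: "nat \<Rightarrow> nat \<Rightarrow> real measure" where
  "holding_law c k = (if k < L then density lborel (exponential_density (rate c)) else return borel 0)"

lemma prob_space_holding_law: "prob_space (holding_law c k)"
  by (auto simp: holding_law_def rate_pos intro!: prob_space_exponential_density prob_space_return)

lemma sets_holding_law[measurable_cong]: "sets (holding_law c k) = sets borel"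
  by (simp add: holding_law_def)

lemma sets_PiM_holding_law: "sets (PiM UNIV (holding_law c)) = sets (PiM UNIV (\<lambda>_. borel))"
  by (intro sets_PiM_cong) (auto simp: sets_holding_law)

lemma holding_prob_chain_path:
  assumes c: "c < K" and B: "B \<in> sets borel"
  shows "holding_prob (K * L) intensity (chain_path c k) B = measure (holding_law c k) B"
proof (cases "k < L")
  case True
  then show ?thesis
    using mult_add_less_mult[OF c True]
    by (simp add: holding_prob_def chain_path_def holding_law_def jump_rate_def intensity_index)
qed (use B in \<open>simp add: holding_prob_def chain_path_def holding_law_def measure_return\<close>)

definition chain_measure :: "nat \<Rightarrow> jump_path measure" where
  "chain_measure c = distr (PiM UNIV (holding_law c)) path_space (\<lambda>h. (chain_path c, h))"

lemma measurable_chain_path_pair: "(\<lambda>h. (chain_path c, h)) \<in> PiM UNIV (holding_law c) \<rightarrow>\<^sub>M path_space"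
  unfolding path_space_def
  by (rule measurable_Pair) (auto simp: measurable_cong_sets[OF sets_PiM_holding_law refl] space_PiM)

lemma prob_space_chain_measure: "prob_space (chain_measure c)"
  unfolding chain_measure_def
  by (intro prob_space.prob_space_distr prob_space_PiM prob_space_holding_law
      measurable_chain_path_pair)

lemma chain_measure_in_subprob_algebra: "chain_measure c \<in> space (subprob_algebra path_space)"
  using prob_space_chain_measure[of c]
  by (auto simp: space_subprob_algebra chain_measure_def prob_space_imp_subprob_space)

lemma measure_chain_measure_cylinder:
  assumes B: "\<And>k. k \<le> n \<Longrightarrow> B k \<in> sets borel"
  shows "measure (chain_measure c) (path_cylinder n z B)
    = (if \<forall>k\<le>n. z k = chain_path c k then \<Prod>k\<le>n. measure (holding_law c k) (B k) else 0)"
proof -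
  interpret holding: prob_space "holding_law c k" for k by (rule prob_space_holding_law)
  interpret holding_product: product_prob_space "holding_law c" UNIV by unfold_locales
  let ?H = "PiM UNIV (holding_law c)"
  have "measure (chain_measure c) (path_cylinder n z B)
      = measure ?H ((\<lambda>h. (chain_path c, h)) -` path_cylinder n z B \<inter> space ?H)"
    unfolding chain_measure_def
    by (rule measure_distr[OF measurable_chain_path_pair path_cylinder_sets[OF B]])
  also have "\<dots> = (if \<forall>k\<le>n. z k = chain_path c k then \<Prod>k\<le>n. measure (holding_law c k) (B k) else 0)"
  proof (cases "\<forall>k\<le>n. z k = chain_path c k")
    case True
    then have "(\<lambda>h. (chain_path c, h)) -` path_cylinder n z B \<inter> space ?H
        = {h \<in> space ?H. \<forall>k\<in>{..n}. h k \<in> B k}"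
      by (auto simp: path_cylinder_def path_state_def path_holding_def)
    moreover have "emeasure ?H {h \<in> space ?H. \<forall>k\<in>{..n}. h k \<in> B k}
        = (\<Prod>k\<le>n. emeasure (holding_law c k) (B k))"
      using B by (intro holding_product.emeasure_PiM_Collect) (auto simp: sets_holding_law)
    moreover have "(\<Prod>k\<le>n. emeasure (holding_law c k) (B k))
        = ennreal (\<Prod>k\<le>n. measure (holding_law c k) (B k))"
      by (simp add: holding.emeasure_eq_measure prod_ennreal)
    ultimately show ?thesis
      using True by (simp add: measure_def prod_nonneg)
  next
    case False
    then have "(\<lambda>h. (chain_path c, h)) -` path_cylinder n z B \<inter> space ?H = {}"
      by (auto simp: path_cylinder_def path_state_def)
    then show ?thesis using False by (simp only: measure_empty if_False)
  qed
  finally show ?thesis .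
qed

lemma measure_chain_measure_cylinder_product:
  assumes c: "c < K" and B: "\<And>k. k \<le> n \<Longrightarrow> B k \<in> sets borel"
  shows "measure (chain_measure c) (path_cylinder n z B)
    = (if z 0 = c * L then 1 else 0) * (\<Prod>k<n. jump_prob (K * L) intensity (z k) (z (Suc k)))
      * (\<Prod>k\<le>n. holding_prob (K * L) intensity (z k) (B k))"
proof -
  note cylinder = measure_chain_measure_cylinder[where n = n and B = B and c = c and z = z, OF B]
  show ?thesis
  proof (cases "\<forall>k\<le>n. z k = chain_path c k")
    case True
    have start: "z 0 = c * L"
      using True[rule_format, of 0] phases_pos by (simp add: chain_path_def)
    have jumps: "(\<Prod>k<n. jump_prob (K * L) intensity (z k) (z (Suc k))) = 1"
      by (simp only: prod_jump_prob_intensity[where z = z and n = n, OF c start] if_P[OF True])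
    have holdings: "(\<Prod>k\<le>n. holding_prob (K * L) intensity (z k) (B k))
        = (\<Prod>k\<le>n. measure (holding_law c k) (B k))"
    proof (rule prod.cong[OF refl])
      fix k assume "k \<in> {..n}"
      then have "z k = chain_path c k" "B k \<in> sets borel" using True B by auto
      then show "holding_prob (K * L) intensity (z k) (B k) = measure (holding_law c k) (B k)"
        by (simp add: holding_prob_chain_path[OF c])
    qed
    have "measure (chain_measure c) (path_cylinder n z B) = (\<Prod>k\<le>n. measure (holding_law c k) (B k))"
      using cylinder True by simp
    then show ?thesis using start jumps holdings by simp
  next
    case False
    show ?thesis
    proof (cases "z 0 = c * L")
      case start: True
      have "(\<Prod>k<n. jump_prob (K * L) intensity (z k) (z (Suc k))) = 0"
        by (simp only: prod_jump_prob_intensity[where z = z and n = n, OF c start] if_not_P[OF False])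
      then show ?thesis using cylinder False by simp
    qed (simp add: cylinder False)
  qed
qed

lemma absorption_index_chain_path:
  assumes c: "c < K"
  shows "absorption_index (K * L) path_state (chain_path c, h) = L"
  unfolding absorption_index_def path_state_def
proof (rule Least_equality)
  show "fst (chain_path c, h) L = K * L" by (simp add: chain_path_def)
  fix k assume "fst (chain_path c, h) k = K * L"
  then show "L \<le> k" using mult_add_less_mult[OF c, of k L] by (auto simp: chain_path_def split: if_splits)
qed

lemma time_and_visits_chain_path:
  assumes c: "c < K"
  shows "time_and_visits (K * L) plus_states (chain_path c, h) = (\<Sum>k<L. h k, visits c)"
proof -
  have "{k. k < L \<and> chain_path c k \<in> plus_states} = {..<visits c}"
    using mult_add_less_mult[OF c] visits_le[of c]
    by (auto simp: chain_path_def plus_states_def)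
  then show ?thesis
    by (simp add: time_and_visits_def absorption_time_def visits_count_def
        absorption_index_chain_path[OF c] path_state_def path_holding_def)
qed

lemma distr_sum_holding_times:
  "distr (PiM UNIV (holding_law c)) lborel (\<lambda>h. \<Sum>k<L. h k)
    = density lborel (erlang_density (L - 1) (rate c))"
proof -
  interpret holding: prob_space "holding_law c k" for k by (rule prob_space_holding_law)
  interpret holding_product: product_prob_space "holding_law c" UNIV by unfold_locales
  let ?H = "PiM UNIV (holding_law c)"
  have component: "distr ?H borel (\<lambda>h. h k) = holding_law c k" for k
  proof -
    have "distr ?H borel (\<lambda>h. h k) = distr ?H (holding_law c k) (\<lambda>h. h k)"
      by (rule distr_cong) (auto simp: sets_holding_law)
    also have "\<dots> = holding_law c k"
      by (rule distr_PiM_component) (auto simp: prob_space_holding_law)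
    finally show ?thesis .
  qed
  have exponential: "distributed ?H lborel (\<lambda>h. h k) (exponential_density (rate c))" if "k < L" for k
    using component[of k] that
    by (auto simp: distributed_def holding_law_def measurable_cong_sets[OF sets_PiM_holding_law refl]
        cong: distr_cong)
  have "holding_product.indep_vars (\<lambda>_. borel) (\<lambda>k h. h k) {..<L}"
  proof (subst holding_product.indep_vars_iff_distr_eq_PiM')
    show "{..<L} \<noteq> {}" using phases_pos by auto
    show "holding_product.random_variable borel (\<lambda>h. h k)" for k
      by (simp add: measurable_cong_sets[OF sets_PiM_holding_law refl])
    have "distr ?H (PiM {..<L} (\<lambda>_. borel)) (\<lambda>h. \<lambda>k\<in>{..<L}. h k)
        = distr ?H (PiM {..<L} (holding_law c)) (\<lambda>h. restrict h {..<L})"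
      by (rule distr_cong) (auto intro!: sets_PiM_cong simp: sets_holding_law restrict_def)
    also have "\<dots> = PiM {..<L} (holding_law c)"
      by (rule holding_product.distr_PiM_restrict_finite) auto
    also have "\<dots> = PiM {..<L} (\<lambda>k. distr ?H borel (\<lambda>h. h k))"
      by (simp add: component)
    finally show "distr ?H (PiM {..<L} (\<lambda>_. borel)) (\<lambda>h. \<lambda>k\<in>{..<L}. h k)
        = PiM {..<L} (\<lambda>k. distr ?H borel (\<lambda>h. h k))" .
  qed
  then have "distributed ?H lborel (\<lambda>h. \<Sum>k\<in>{..<L}. h k) (erlang_density (card {..<L} - 1) (rate c))"
    using phases_pos rate_pos exponential
    by (intro holding_product.exponential_distributed_sum) auto
  then show ?thesis by (simp add: distributed_def)
qed

lemma distr_chain_measure: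
  assumes c: "c < K"
  shows "distr (chain_measure c) borel (time_and_visits (K * L) plus_states)
    = erlang_count_law (L - 1) (rate c) (visits c)"
proof -
  let ?H = "PiM UNIV (holding_law c)"
  have "distr (chain_measure c) borel (time_and_visits (K * L) plus_states)
    = distr ?H borel (\<lambda>h. (\<Sum>k<L. h k, visits c))"
    unfolding chain_measure_def
    by (subst distr_distr[OF measurable_time_and_visits measurable_chain_path_pair])
      (simp add: comp_def time_and_visits_chain_path[OF c])
  also have "\<dots> = distr (distr ?H lborel (\<lambda>h. \<Sum>k<L. h k)) borel (\<lambda>y. (y, visits c))"
    by (subst distr_distr) (auto simp: measurable_cong_sets[OF sets_PiM_holding_law refl] comp_def)
  also have "\<dots> = erlang_count_law (L - 1) (rate c) (visits c)"
    by (simp add: distr_sum_holding_times erlang_count_law_def)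
  finally show ?thesis .
qed

end

locale erlang_chain_mixture = erlang_chains +
  fixes P :: "'a measure" and block :: "'a \<Rightarrow> nat"
  assumes prob_space_P: "prob_space P"
    and measurable_block: "block \<in> P \<rightarrow>\<^sub>M count_space UNIV"
    and block_less: "\<And>x. x \<in> space P \<Longrightarrow> block x < K"
begin

definition weight :: "nat \<Rightarrow> real" where
  "weight c = measure P {x \<in> space P. block x = c}"

definition initial :: "real vec" where
  "initial = vec (K * L) (\<lambda>s. if s mod L = 0 then weight (s div L) else 0)"

definition path_law :: "jump_path measure" where
  "path_law = P \<bind> (\<lambda>x. chain_measure (block x))"

lemma space_P_nonempty: "space P \<noteq> {}"
  using prob_space_P prob_space.not_empty by blast

lemma measurable_chain_measure_block:
  "(\<lambda>x. chain_measure (block x)) \<in> P \<rightarrow>\<^sub>M subprob_algebra path_space"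
  by (rule measurable_compose[OF measurable_block]) (simp add: chain_measure_in_subprob_algebra)

lemma sets_path_law: "sets path_law = sets path_space"
  unfolding path_law_def using space_P_nonempty by (simp add: chain_measure_def)

lemma prob_space_path_law: "prob_space path_law"
  unfolding path_law_def
  by (rule prob_space.prob_space_bind[OF prob_space_P _ measurable_chain_measure_block])
    (simp add: prob_space_chain_measure)

lemma integral_block: "(\<integral>x. g (block x) \<partial>P) = (\<Sum>c<K. g c * weight c)"
proof -
  interpret prob_space P by (rule prob_space_P)
  have level_sets: "{x \<in> space P. block x = c} \<in> events" for c
    using measurable_block by measurable
  have "(\<integral>x. g (block x) \<partial>P) = (\<integral>x. (\<Sum>c<K. g c * indicator {x \<in> space P. block x = c} x) \<partial>P)"
  proof (rule Bochner_Integration.integral_cong[OF refl])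
    fix x assume x: "x \<in> space P"
    have "(\<Sum>c<K. g c * indicator {x \<in> space P. block x = c} x) = (\<Sum>c<K. if c = block x then g c else 0)"
      using x by (intro sum.cong) (auto simp: indicator_def)
    also have "\<dots> = g (block x)" using block_less[OF x] by simp
    finally show "g (block x) = (\<Sum>c<K. g c * indicator {x \<in> space P. block x = c} x)" by simp
  qed
  also have "\<dots> = (\<Sum>c<K. g c * weight c)"
    using level_sets by (subst Bochner_Integration.integral_sum) (auto simp: weight_def emeasure_eq_measure)
  finally show ?thesis .
qed

lemma sum_weight: "(\<Sum>c<K. weight c) = 1"
  using integral_block[of "\<lambda>_. 1"] prob_space.prob_space[OF prob_space_P] by simp

lemma initial_index:
  "(if s < K * L then initial $ s else 0) = (\<Sum>c<K. weight c * (if s = c * L then 1 else 0))"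
proof (cases "\<exists>c<K. s = c * L")
  case True
  then obtain c0 where c0: "c0 < K" "s = c0 * L" by blast
  then have "(\<Sum>c<K. weight c * (if s = c * L then 1 else 0)) = (\<Sum>c<K. if c = c0 then weight c else 0)"
    using phases_pos by (intro sum.cong) auto
  also have "\<dots> = weight c0" using c0 by simp
  finally show ?thesis using c0 mult_add_less_mult[OF c0(1) phases_pos] phases_pos by (simp add: initial_def)
next
  case False
  have "\<not> (s < K * L \<and> s mod L = 0)"
  proof
    assume "s < K * L \<and> s mod L = 0"
    then have "s div L < K" "s = s div L * L" by (auto simp: less_mult_imp_div_less)
    then show False using False by blast
  qed
  then show ?thesis using False by (auto simp: initial_def)
qed

lemma markov_jump_process_path_law:
  "markov_jump_process path_law path_state path_holding (K * L) intensity initial"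
  unfolding markov_jump_process_def
proof (intro conjI allI impI)
  show "prob_space path_law" by (rule prob_space_path_law)
  show "path_state k \<in> path_law \<rightarrow>\<^sub>M count_space UNIV" for k
    by (simp add: measurable_cong_sets[OF sets_path_law refl])
  show "path_holding k \<in> borel_measurable path_law" for k
    by (simp add: measurable_cong_sets[OF sets_path_law refl])
next
  fix n z and B :: "nat \<Rightarrow> real set"
  assume "\<forall>k\<le>n. B k \<in> sets borel"
  then have B: "\<And>k. k \<le> n \<Longrightarrow> B k \<in> sets borel" by blast
  define J where "J = (\<Prod>k<n. jump_prob (K * L) intensity (z k) (z (Suc k)))"
  define H where "H = (\<Prod>k\<le>n. holding_prob (K * L) intensity (z k) (B k))"
  interpret prob_space P by (rule prob_space_P)
  have cylinder: "{\<omega> \<in> space path_law. \<forall>k\<le>n. path_state k \<omega> = z k \<and> path_holding k \<omega> \<in> B k}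
      = path_cylinder n z B"
    using sets_eq_imp_space_eq[OF sets_path_law] by (simp add: path_cylinder_def space_path_space)
  have "measure path_law (path_cylinder n z B)
      = (\<integral>x. measure (chain_measure (block x)) (path_cylinder n z B) \<partial>P)"
    unfolding path_law_def
    by (rule measure_bind[OF measurable_chain_measure_block path_cylinder_sets[OF B]])
  also have "\<dots> = (\<Sum>c<K. measure (chain_measure c) (path_cylinder n z B) * weight c)"
    by (rule integral_block)
  also have "\<dots> = (\<Sum>c<K. weight c * (if z 0 = c * L then 1 else 0) * J * H)"
    using measure_chain_measure_cylinder_product[where n = n and B = B and z = z, OF _ B]
    by (intro sum.cong refl) (simp add: J_def H_def)
  also have "\<dots> = (\<Sum>c<K. weight c * (if z 0 = c * L then 1 else 0)) * J * H"
    by (simp add: sum_distrib_right)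
  also have "\<dots> = (if z 0 < K * L then initial $ z 0 else 0) * J * H"
    by (simp add: initial_index)
  finally show "measure path_law
      {\<omega> \<in> space path_law. \<forall>k\<le>n. path_state k \<omega> = z k \<and> path_holding k \<omega> \<in> B k}
    = (if z 0 < K * L then initial $ z 0 else 0) * (\<Prod>k<n. jump_prob (K * L) intensity (z k) (z (Suc k)))
      * (\<Prod>k\<le>n. holding_prob (K * L) intensity (z k) (B k))"
    unfolding cylinder J_def H_def .
qed

lemma sum_initial: "(\<Sum>s<K * L. initial $ s) = 1"
proof -
  have "(\<Sum>s<K * L. initial $ s) = (\<Sum>s<K * L. \<Sum>c<K. weight c * (if s = c * L then 1 else 0))"
    by (intro sum.cong refl) (simp add: initial_index[symmetric])
  also have "\<dots> = (\<Sum>c<K. weight c * (\<Sum>s<K * L. if s = c * L then 1 else 0))"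
    by (subst sum.swap) (simp only: sum_distrib_left)
  also have "\<dots> = (\<Sum>c<K. weight c)"
    using mult_add_less_mult[OF _ phases_pos] by (intro sum.cong refl) auto
  finally show ?thesis by (simp add: sum_weight)
qed

theorem MMPH_star_erlang_mixture:
  "MMPH_star (P \<bind> (\<lambda>x. erlang_count_law (L - 1) (rate (block x)) (visits (block x))))"
  unfolding MMPH_star_def
proof (intro exI conjI)
  obtain x where "x \<in> space P" using space_P_nonempty by blast
  then show "0 < K * L" using block_less phases_pos by fastforce
  show "sub_intensity_matrix (K * L) intensity" by (rule sub_intensity_matrix_intensity)
  show "initial \<in> carrier_vec (K * L)" by (simp add: initial_def)
  show "\<forall>s<K * L. 0 \<le> initial $ s" by (simp add: initial_def weight_def)
  show "(\<Sum>s<K * L. initial $ s) = 1" by (rule sum_initial)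
  show "plus_states \<subseteq> {..<K * L}" by (auto simp: plus_states_def)
  show "\<forall>s<K * L. s \<notin> plus_states \<longrightarrow> initial $ s = 0"
    using visits_pos by (auto simp: initial_def plus_states_def)
  show "markov_jump_process path_law path_state path_holding (K * L) intensity initial"
    by (rule markov_jump_process_path_law)
  have "distr path_law borel (time_and_visits (K * L) plus_states)
    = P \<bind> (\<lambda>x. distr (chain_measure (block x)) borel (time_and_visits (K * L) plus_states))"
    unfolding path_law_def
    by (rule distr_bind[OF measurable_chain_measure_block space_P_nonempty measurable_time_and_visits])
  also have "\<dots> = P \<bind> (\<lambda>x. erlang_count_law (L - 1) (rate (block x)) (visits (block x)))"
    by (intro bind_cong refl) (simp add: distr_chain_measure block_less)
  finally show "P \<bind> (\<lambda>x. erlang_count_law (L - 1) (rate (block x)) (visits (block x)))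
    = distr path_law borel (\<lambda>\<omega>. (absorption_time (K * L) path_state path_holding \<omega>,
        visits_count (K * L) path_state plus_states \<omega>))"
    unfolding time_and_visits_def[symmetric] by (rule sym)
qed

end

section \<open>Grid approximation\<close>

lemma (in prob_space) abs_integral_le_bound:
  fixes g :: "'a \<Rightarrow> real"
  assumes "g \<in> borel_measurable M" and "\<And>x. \<bar>g x\<bar> \<le> B"
  shows "\<bar>\<integral>x. g x \<partial>M\<bar> \<le> B"
proof -
  have "integrable M g" by (rule integrable_const_bound[where B = B]) (use assms in auto)
  have "\<bar>\<integral>x. g x \<partial>M\<bar> \<le> (\<integral>x. \<bar>g x\<bar> \<partial>M)"
    using integral_norm_bound[of M g] by simp
  also have "\<dots> \<le> (\<integral>x. B \<partial>M)"
    using \<open>integrable M g\<close> assms(2) by (intro integral_mono) auto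
  finally show ?thesis by (simp add: prob_space)
qed

lemma integral_bind_erlang_count_law:
  fixes f :: "real \<times> nat \<Rightarrow> real"
  assumes P: "prob_space P" and block: "block \<in> P \<rightarrow>\<^sub>M count_space UNIV"
    and rate: "\<And>c. 0 < rate c" and f: "f \<in> borel_measurable borel" "\<And>z. \<bar>f z\<bar> \<le> B"
  shows "(\<integral>z. f z \<partial>(P \<bind> (\<lambda>x. erlang_count_law k (rate (block x)) (visits (block x)))))
    = (\<integral>x. (\<integral>y. f (y, visits (block x)) \<partial>density lborel (erlang_density k (rate (block x)))) \<partial>P)"
proof -
  have law: "prob_space (erlang_count_law k (rate c) (visits c))" for c
    unfolding erlang_count_law_def
    by (intro prob_space.prob_space_distr prob_space_erlang_density rate) simp
  then have law_space: "erlang_count_law k (rate c) (visits c) \<in> space (subprob_algebra borel)" for c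
    by (auto simp: space_subprob_algebra erlang_count_law_def prob_space_imp_subprob_space)
  have kernel: "(\<lambda>x. erlang_count_law k (rate (block x)) (visits (block x))) \<in> P \<rightarrow>\<^sub>M subprob_algebra borel"
    by (rule measurable_compose[OF block]) (simp add: law_space)
  have "finite_measure P" using P by (simp add: prob_space_def)
  moreover have "AE x in P. emeasure (erlang_count_law k (rate (block x)) (visits (block x)))
      (space (erlang_count_law k (rate (block x)) (visits (block x)))) \<le> ennreal 1"
    by (intro AE_I2) (simp add: prob_space.emeasure_space_1[OF law])
  ultimately have "(\<integral>z. f z \<partial>(P \<bind> (\<lambda>x. erlang_count_law k (rate (block x)) (visits (block x)))))
      = (\<integral>x. (\<integral>z. f z \<partial>erlang_count_law k (rate (block x)) (visits (block x))) \<partial>P)"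
    using f(2) by (intro integral_bind[OF f(1) _ kernel])
  also have "\<dots> = (\<integral>x. (\<integral>y. f (y, visits (block x)) \<partial>density lborel (erlang_density k (rate (block x)))) \<partial>P)"
    by (intro Bochner_Integration.integral_cong refl) (simp add: erlang_count_law_def integral_distr f(1))
  finally show ?thesis .
qed

text \<open>\<open>cell m (x, n)\<close> encodes the interval \<open>[q/m, (q+1)/m)\<close> containing \<open>x\<close> (the index \<open>q\<close> is
  capped at \<open>m\<^sup>2 - 1\<close>) and the count \<open>n\<close> (counts above \<open>m\<close> are lumped with \<open>1\<close>) as
  \<open>m * q + (n - 1)\<close>; \<open>cell_mean\<close> and \<open>cell_count\<close> decode the representative point \<open>((q+1)/m, n)\<close>.\<close>

definition grid_index :: "nat \<Rightarrow> real \<Rightarrow> nat" where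
  "grid_index m x = min (m * m - 1) (nat \<lfloor>x * real m\<rfloor>)"

definition count_index :: "nat \<Rightarrow> nat \<Rightarrow> nat" where
  "count_index m n = (if n \<in> {1..m} then n - 1 else 0)"

definition cell :: "nat \<Rightarrow> real \<times> nat \<Rightarrow> nat" where
  "cell m xn = m * grid_index m (fst xn) + count_index m (snd xn)"

definition cell_mean :: "nat \<Rightarrow> nat \<Rightarrow> real" where
  "cell_mean m c = real (c div m + 1) / real m"

definition cell_count :: "nat \<Rightarrow> nat \<Rightarrow> nat" where
  "cell_count m c = c mod m + 1"

lemma count_index_less: "0 < m \<Longrightarrow> count_index m n < m"
  by (auto simp: count_index_def)

lemma cell_div: "0 < m \<Longrightarrow> cell m xn div m = grid_index m (fst xn)"
  by (simp add: cell_def count_index_less)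

lemma cell_mod: "0 < m \<Longrightarrow> cell m xn mod m = count_index m (snd xn)"
  by (simp add: cell_def count_index_less)

lemma cell_count_cell: "1 \<le> n \<Longrightarrow> n \<le> m \<Longrightarrow> cell_count m (cell m (x, n)) = n"
  by (simp add: cell_count_def cell_mod count_index_def)

lemma cell_less:
  assumes m: "0 < m"
  shows "cell m xn < m * m * m"
proof -
  have "grid_index m (fst xn) \<le> m * m - 1" by (simp add: grid_index_def)
  then have "m * grid_index m (fst xn) \<le> m * (m * m - 1)" by simp
  then have "cell m xn < m * (m * m - 1) + m"
    using count_index_less[OF m, of "snd xn"] unfolding cell_def by linarith
  also have "\<dots> = m * m * m" using m by (simp add: algebra_simps)
  finally show ?thesis .
qed

lemma measurable_cell: "cell m \<in> (borel :: (real \<times> nat) measure) \<rightarrow>\<^sub>M count_space UNIV"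
proof -
  have snd: "(snd :: real \<times> nat \<Rightarrow> nat) \<in> borel \<Otimes>\<^sub>M borel \<rightarrow>\<^sub>M count_space UNIV"
    using measurable_snd[of "borel :: real measure" "borel :: nat measure"]
    by (simp add: measurable_cong_sets[OF refl sets_borel_eq_count_space])
  have floor: "(\<lambda>xn :: real \<times> nat. \<lfloor>fst xn * real m\<rfloor>) \<in> borel \<Otimes>\<^sub>M borel \<rightarrow>\<^sub>M count_space UNIV"
    by measurable
  have "(\<lambda>xn. (\<lambda>i. m * min (m * m - 1) (nat i) + count_index m (snd xn)) \<lfloor>fst xn * real m\<rfloor>)
      \<in> (borel \<Otimes>\<^sub>M borel :: (real \<times> nat) measure) \<rightarrow>\<^sub>M count_space UNIV"
    by (rule measurable_compose_countable'[OF _ floor]) (auto intro: measurable_compose[OF snd])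
  then show ?thesis by (simp add: cell_def[abs_def] grid_index_def borel_prod)
qed

lemma cell_mean_bounds:
  assumes m: "0 < m" and x: "0 \<le> x" "x + 1 \<le> real m"
  shows "x < cell_mean m (cell m (x, n))" and "cell_mean m (cell m (x, n)) \<le> x + 1 / real m"
proof -
  define q where "q = nat \<lfloor>x * real m\<rfloor>"
  have q: "real q \<le> x * real m" "x * real m < real q + 1"
    using x by (auto simp: q_def)
  have "x * real m \<le> (real m - 1) * real m" using x by (intro mult_right_mono) auto
  then have "real q < real (m * m)" using q m by (simp add: algebra_simps)
  then have "q \<le> m * m - 1" by (simp only: of_nat_less_iff)
  then have "grid_index m x = q" by (simp add: grid_index_def q_def[symmetric])
  then have mean: "cell_mean m (cell m (x, n)) = (real q + 1) / real m"
    using m by (simp add: cell_mean_def cell_div)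
  show "x < cell_mean m (cell m (x, n))" using q m by (simp add: mean field_simps)
  show "cell_mean m (cell m (x, n)) \<le> x + 1 / real m" using q m by (simp add: mean field_simps)
qed

lemma tendsto_cell_mean:
  assumes x: "0 \<le> x"
  shows "(\<lambda>k. cell_mean (Suc k) (cell (Suc k) (x, n))) \<longlonglongrightarrow> x"
proof (rule tendsto_sandwich[where f = "\<lambda>_. x" and h = "\<lambda>k. x + 1 / real (Suc k)"])
  obtain N :: nat where "x + 1 \<le> real N" using real_arch_simple by blast
  then have large: "eventually (\<lambda>k. x + 1 \<le> real (Suc k)) sequentially"
    unfolding eventually_sequentially by (intro exI[of _ N]) auto
  show "eventually (\<lambda>k. x \<le> cell_mean (Suc k) (cell (Suc k) (x, n))) sequentially"
    using large by (rule eventually_mono) (rule less_imp_le[OF cell_mean_bounds(1)[OF zero_less_Suc x]])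
  show "eventually (\<lambda>k. cell_mean (Suc k) (cell (Suc k) (x, n)) \<le> x + 1 / real (Suc k)) sequentially"
    using large by (rule eventually_mono) (rule cell_mean_bounds(2)[OF zero_less_Suc x])
  show "(\<lambda>k. x + 1 / real (Suc k)) \<longlonglongrightarrow> x"
    using tendsto_add[OF tendsto_const LIMSEQ_inverse_real_of_nat, of x] by (simp add: inverse_eq_divide)
qed simp

definition erlang_grid_approx :: "(real \<times> nat) measure \<Rightarrow> nat \<Rightarrow> (real \<times> nat) measure" where
  "erlang_grid_approx F m = F \<bind>
     (\<lambda>xn. erlang_count_law (m - 1) (real m / cell_mean m (cell m xn)) (cell_count m (cell m xn)))"

lemma MMPH_star_erlang_grid_approx:
  assumes F: "prob_space F" "sets F = sets borel" and m: "0 < m"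
  shows "MMPH_star (erlang_grid_approx F m)"
proof -
  have "erlang_chain_mixture m (m * m * m) (\<lambda>c. real m / cell_mean m c) (cell_count m) F (cell m)"
  proof (intro erlang_chain_mixture.intro erlang_chains.intro erlang_chain_mixture_axioms.intro)
    show "0 < m" by (rule m)
    show "0 < real m / cell_mean m c" for c using m by (simp add: cell_mean_def)
    show "0 < cell_count m c" for c by (simp add: cell_count_def)
    show "cell_count m c \<le> m" for c using m by (simp add: cell_count_def Suc_leI)
    show "prob_space F" by (rule F(1))
    show "cell m \<in> F \<rightarrow>\<^sub>M count_space UNIV"
      using measurable_cell by (simp add: measurable_cong_sets[OF F(2) refl])
    show "cell m x < m * m * m" for x by (rule cell_less[OF m])
  qed
  then show ?thesis
    unfolding erlang_grid_approx_def by (rule erlang_chain_mixture.MMPH_star_erlang_mixture)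
qed

lemma tendsto_integral_erlang_cell:
  fixes f :: "real \<times> nat \<Rightarrow> real"
  assumes f: "continuous_on UNIV f" "\<And>z. \<bar>f z\<bar> \<le> B" and x: "0 \<le> x" and n: "1 \<le> n"
  defines "c k \<equiv> cell (Suc k) (x, n)"
  defines "D k \<equiv> density lborel (erlang_density k (real (Suc k) / cell_mean (Suc k) (c k)))"
  shows "(\<lambda>k. \<integral>y. f (y, cell_count (Suc k) (c k)) \<partial>D k) \<longlonglongrightarrow> f (x, n)"
proof -
  have g: "continuous_on UNIV (\<lambda>y. f (y, n))"
    by (rule continuous_on_compose2[OF f(1)]) (auto intro!: continuous_intros)
  have lim: "(\<lambda>k. \<integral>y. f (y, n) \<partial>D k) \<longlonglongrightarrow> f (x, n)"
    unfolding D_def c_def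
    using g by (intro tendsto_integral_erlang_scaled[OF borel_measurable_continuous_onI[OF g] f(2)]
        tendsto_cell_mean[OF x]) (auto simp: continuous_on_eq_continuous_at cell_mean_def)
  have "eventually (\<lambda>k. cell_count (Suc k) (c k) = n) sequentially"
    unfolding eventually_sequentially c_def using n by (auto intro!: exI[of _ n] cell_count_cell)
  then have "eventually (\<lambda>k. (\<integral>y. f (y, n) \<partial>D k) = (\<integral>y. f (y, cell_count (Suc k) (c k)) \<partial>D k))
      sequentially"
    by (rule eventually_mono) simp
  with lim show ?thesis by (rule Lim_transform_eventually)
qed

lemma integral_erlang_grid_approx:
  fixes f :: "real \<times> nat \<Rightarrow> real"
  assumes F: "prob_space F" "sets F = sets borel" and m: "0 < m"
    and f: "f \<in> borel_measurable borel" "\<And>z. \<bar>f z\<bar> \<le> B"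
  shows "integral\<^sup>L (erlang_grid_approx F m) f = (\<integral>xn. (\<integral>y. f (y, cell_count m (cell m xn))
    \<partial>density lborel (erlang_density (m - 1) (real m / cell_mean m (cell m xn)))) \<partial>F)"
proof -
  have "cell m \<in> F \<rightarrow>\<^sub>M count_space UNIV"
    using measurable_cell by (simp add: measurable_cong_sets[OF F(2) refl])
  from integral_bind_erlang_count_law[OF F(1) this _ f,
      where rate = "\<lambda>c. real m / cell_mean m c" and visits = "cell_count m" and k = "m - 1"]
  show ?thesis using m by (simp add: erlang_grid_approx_def cell_mean_def)
qed

lemma weak_conv_prod_erlang_grid_approx:
  assumes F: "prob_space F" "sets F = sets borel" and support: "measure F ({0..} \<times> {1..}) = 1"
  shows "weak_conv_prod (\<lambda>k. erlang_grid_approx F (Suc k)) F"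
  unfolding weak_conv_prod_def
proof (intro allI impI, elim conjE)
  fix f :: "real \<times> nat \<Rightarrow> real"
  assume cont: "continuous_on UNIV f" and "bounded (range f)"
  then obtain B where B: "\<And>z. \<bar>f z\<bar> \<le> B" by (auto simp: bounded_iff)
  have f_borel: "f \<in> borel_measurable borel" by (rule borel_measurable_continuous_onI[OF cont])
  interpret prob_space F by (rule F(1))
  have cell_F: "cell (Suc k) \<in> F \<rightarrow>\<^sub>M count_space UNIV" for k
    using measurable_cell by (simp add: measurable_cong_sets[OF F(2) refl])
  define E where "E k c = (\<integral>y. f (y, cell_count (Suc k) c)
      \<partial>density lborel (erlang_density k (real (Suc k) / cell_mean (Suc k) c)))" for k c
  have E_bound: "\<bar>E k c\<bar> \<le> B" for k c
  proof -
    have "0 < real (Suc k) / cell_mean (Suc k) c" by (simp add: cell_mean_def)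
    then interpret erlang: prob_space "density lborel (erlang_density k (real (Suc k) / cell_mean (Suc k) c))"
      by (rule prob_space_erlang_density)
    show ?thesis unfolding E_def using f_borel by (intro erlang.abs_integral_le_bound B) simp
  qed
  have approx: "integral\<^sup>L (erlang_grid_approx F (Suc k)) f = (\<integral>xn. E k (cell (Suc k) xn) \<partial>F)" for k
    by (simp add: integral_erlang_grid_approx[OF F(1,2) _ f_borel B] E_def)
  have "(\<lambda>k. \<integral>xn. E k (cell (Suc k) xn) \<partial>F) \<longlonglongrightarrow> integral\<^sup>L F f"
  proof (rule integral_dominated_convergence[where w = "\<lambda>_. B"])
    show "f \<in> borel_measurable F" using f_borel by (simp add: measurable_cong_sets[OF F(2) refl])
    show "(\<lambda>xn. E k (cell (Suc k) xn)) \<in> borel_measurable F" for k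
      by (rule measurable_compose[OF cell_F borel_measurable_count_space])
    show "AE xn in F. norm (E k (cell (Suc k) xn)) \<le> B" for k
      using E_bound by simp
    have "AE xn in F. xn \<in> {0..} \<times> {1..}"
      using support by (intro AE_prob_1) simp
    then show "AE xn in F. (\<lambda>k. E k (cell (Suc k) xn)) \<longlonglongrightarrow> f xn"
    proof (rule eventually_mono)
      fix xn :: "real \<times> nat" assume "xn \<in> {0..} \<times> {1..}"
      then obtain x n where "xn = (x, n)" "0 \<le> x" "1 \<le> n" by auto
      then show "(\<lambda>k. E k (cell (Suc k) xn)) \<longlonglongrightarrow> f xn"
        unfolding E_def using tendsto_integral_erlang_cell[OF cont B, of x n] by simp
    qed
  qed simp
  then show "(\<lambda>k. integral\<^sup>L (erlang_grid_approx F (Suc k)) f) \<longlonglongrightarrow> integral\<^sup>L F f"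
    by (simp add: approx)
qed

theorem mainTheorem1:
  fixes F :: "(real \<times> nat) measure"
  assumes "prob_space F"
    and "sets F = sets borel"
    and "measure F ({0..} \<times> {1..}) = 1"
  shows "\<exists>\<mu> :: nat \<Rightarrow> (real \<times> nat) measure. (\<forall>n. MMPH_star (\<mu> n)) \<and> weak_conv_prod \<mu> F"
proof (intro exI[of _ "\<lambda>k. erlang_grid_approx F (Suc k)"] conjI allI)
  show "MMPH_star (erlang_grid_approx F (Suc k))" for k
    using assms(1,2) by (rule MMPH_star_erlang_grid_approx) simp
  show "weak_conv_prod (\<lambda>k. erlang_grid_approx F (Suc k)) F"
    using assms by (rule weak_conv_prod_erlang_grid_approx)
qed

end
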